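(* Let $Y\subset\mathbb{R}^n$ be open, and let $\omega\colon Y\to\mathbb{R}^n$, $f\colon Y\to\mathbb{R}^n$, $F\colon Y\to\mathbb{R}$, $H\colon Y\to\mathbb{R}^{n\times m}$, $g\colon Y\to\mathbb{R}^m$, $g^{\mathrm{num}}\colon Y\times Y\to\mathbb{R}^m$, $f^{\mathrm{num}}\colon Y\times Y\to\mathbb{R}^n$ be arbitrary with $f^{\mathrm{num}}(u,u)=f(u)$, $g^{\mathrm{num}}(u,u)=g(u)$. Then the following are equivalent: (A) there exists $F^{\mathrm{num}}\colon Y\times Y\to\mathbb{R}$ with $F^{\mathrm{num}}(u,u)=F(u)$ such that for all $u_-,u_0,u_+\in Y$, $$\omega(u_0)\cdot\Big(f^{\mathrm{num}}(u_0,u_+)-f^{\mathrm{num}}(u_-,u_0)+H(u_0)g^{\mathrm{num}}(u_0,u_+)-H(u_0)g^{\mathrm{num}}(u_-,u_0)\Big)\ \ge\ F^{\mathrm{num}}(u_0,u_+)-F^{\mathrm{num}}(u_-,u_0);$$ (B) for all $u_-,u_+\in Y$, $$[\![\omega]\!]\cdot f^{\mathrm{num}}(u_-,u_+)+[\![\omega\cdot H]\!]\,g^{\mathrm{num}}(u_-,u_+)-[\![\omega\cdot Hg]\!]\ \le\ [\![\omega\cdot f-F]\!].$$ Moreover, there exists a consistent $F^{\mathrm{num}}$ with equality in (A) for all triples iff (B) holds with equality for all pairs, and then $$F^{\mathrm{num}}=\{\{F\}\}+\{\{\omega\}\}\cdot f^{\mathrm{num}}-\{\{\omega\cdot f\}\}-\{\{\omega\cdot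 Hg\}\}+\{\{\omega\cdot H\}\}\,g^{\mathrm{num}}.$$
   Context: For a function $a$ on $Y$ and states $u_\pm$: $\{\{a\}\}=\tfrac12(a(u_-)+a(u_+))$, $[\![a]\!]=a(u_+)-a(u_-)$; $\omega\cdot H=\omega^TH\in\mathbb{R}^{1\times m}$ and $\omega\cdot Hg=\omega^THg\in\mathbb{R}$; numerical fluxes are evaluated at $(u_-,u_+)$. *)

theory Defs
  imports "HOL-Analysis.Analysis"
begin

definition avg :: "('a \<Rightarrow> 'b::real_vector) \<Rightarrow> 'a \<Rightarrow> 'a \<Rightarrow> 'b" where
  "avg a um up = (1/2) *\<^sub>R (a um + a up)"

definition jump :: "('a \<Rightarrow> 'b::real_vector) \<Rightarrow> 'a \<Rightarrow> 'a \<Rightarrow> 'b" where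
  "jump a um up = a up - a um"

end

theory Submission
  imports Defs
begin

text \<open>
  With \<open>\<phi> w a b = \<omega>(w) \<cdot> (fnum(a,b) + H(w) gnum(a,b))\<close> the cell inequality (A) at \<open>u0\<close> reads
  \<open>\<phi> u0 u0 up - \<phi> u0 um u0 \<ge> Fnum u0 up - Fnum um u0\<close>. Taking \<open>up = u0\<close>, resp. \<open>um = u0\<close>, and
  using consistency, (A) pins the entropy flux at an interface \<open>(a, b)\<close> between a lower bound seen
  from the cell \<open>b\<close> and an upper bound seen from the cell \<open>a\<close>; conversely the two bounds add up to
  (A). Hence a consistent entropy flux exists iff the lower bound never exceeds the upper one, in which
  case the lower bound itself is one; and the upper minus the lower bound is exactly the right-hand
  side minus the left-hand side of (B). In the equality case both bounds are attained, so the flux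
  is their mean.
\<close>

definition lower_entropy_flux :: "('a \<Rightarrow> 'a \<Rightarrow> 'a \<Rightarrow> real) \<Rightarrow> ('a \<Rightarrow> real) \<Rightarrow> 'a \<Rightarrow> 'a \<Rightarrow> real"
  where "lower_entropy_flux \<phi> F a b = F b + \<phi> b a b - \<phi> b b b"

definition upper_entropy_flux :: "('a \<Rightarrow> 'a \<Rightarrow> 'a \<Rightarrow> real) \<Rightarrow> ('a \<Rightarrow> real) \<Rightarrow> 'a \<Rightarrow> 'a \<Rightarrow> real"
  where "upper_entropy_flux \<phi> F a b = F a + \<phi> a a b - \<phi> a a a"

lemma lower_entropy_flux_diag [simp]: "lower_entropy_flux \<phi> F u u = F u"
  by (simp add: lower_entropy_flux_def)

lemma cell_entropy_ineq_iff_between_bounds: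
  fixes \<phi> :: "'a \<Rightarrow> 'a \<Rightarrow> 'a \<Rightarrow> real"
  assumes consistent: "\<forall>u\<in>Y. G u u = F u"
  shows "(\<forall>um\<in>Y. \<forall>u0\<in>Y. \<forall>up\<in>Y. \<phi> u0 u0 up - \<phi> u0 um u0 \<ge> G u0 up - G um u0)
    \<longleftrightarrow> (\<forall>a\<in>Y. \<forall>b\<in>Y. lower_entropy_flux \<phi> F a b \<le> G a b \<and> G a b \<le> upper_entropy_flux \<phi> F a b)"
proof
  assume cell: "\<forall>um\<in>Y. \<forall>u0\<in>Y. \<forall>up\<in>Y. \<phi> u0 u0 up - \<phi> u0 um u0 \<ge> G u0 up - G um u0"
  show "\<forall>a\<in>Y. \<forall>b\<in>Y. lower_entropy_flux \<phi> F a b \<le> G a b \<and> G a b \<le> upper_entropy_flux \<phi> F a b"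
  proof (intro ballI conjI)
    fix a b assume a: "a \<in> Y" and b: "b \<in> Y"
    from cell a b have "\<phi> b b b - \<phi> b a b \<ge> G b b - G a b"
      by blast
    with consistent b show "lower_entropy_flux \<phi> F a b \<le> G a b"
      by (simp add: lower_entropy_flux_def)
    from cell a b have "\<phi> a a b - \<phi> a a a \<ge> G a b - G a a"
      by blast
    with consistent a show "G a b \<le> upper_entropy_flux \<phi> F a b"
      by (simp add: upper_entropy_flux_def)
  qed
next
  assume bounds: "\<forall>a\<in>Y. \<forall>b\<in>Y. lower_entropy_flux \<phi> F a b \<le> G a b \<and> G a b \<le> upper_entropy_flux \<phi> F a b"
  show "\<forall>um\<in>Y. \<forall>u0\<in>Y. \<forall>up\<in>Y. \<phi> u0 u0 up - \<phi> u0 um u0 \<ge> G u0 up - G um u0"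
  proof (intro ballI)
    fix um u0 up assume "um \<in> Y" "u0 \<in> Y" "up \<in> Y"
    with bounds have "lower_entropy_flux \<phi> F um u0 \<le> G um u0" "G u0 up \<le> upper_entropy_flux \<phi> F u0 up"
      by blast+
    then show "\<phi> u0 u0 up - \<phi> u0 um u0 \<ge> G u0 up - G um u0"
      by (simp add: lower_entropy_flux_def upper_entropy_flux_def)
  qed
qed

lemma cell_entropy_eq_iff_at_bounds:
  fixes \<phi> :: "'a \<Rightarrow> 'a \<Rightarrow> 'a \<Rightarrow> real"
  assumes consistent: "\<forall>u\<in>Y. G u u = F u"
  shows "(\<forall>um\<in>Y. \<forall>u0\<in>Y. \<forall>up\<in>Y. \<phi> u0 u0 up - \<phi> u0 um u0 = G u0 up - G um u0)
    \<longleftrightarrow> (\<forall>a\<in>Y. \<forall>b\<in>Y. G a b = lower_entropy_flux \<phi> F a b \<and> G a b = upper_entropy_flux \<phi> F a b)"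
proof
  assume cell: "\<forall>um\<in>Y. \<forall>u0\<in>Y. \<forall>up\<in>Y. \<phi> u0 u0 up - \<phi> u0 um u0 = G u0 up - G um u0"
  show "\<forall>a\<in>Y. \<forall>b\<in>Y. G a b = lower_entropy_flux \<phi> F a b \<and> G a b = upper_entropy_flux \<phi> F a b"
  proof (intro ballI conjI)
    fix a b assume a: "a \<in> Y" and b: "b \<in> Y"
    from cell a b have "\<phi> b b b - \<phi> b a b = G b b - G a b"
      by blast
    with consistent b show "G a b = lower_entropy_flux \<phi> F a b"
      by (simp add: lower_entropy_flux_def)
    from cell a b have "\<phi> a a b - \<phi> a a a = G a b - G a a"
      by blast
    with consistent a show "G a b = upper_entropy_flux \<phi> F a b"
      by (simp add: upper_entropy_flux_def)
  qed
next
  assume bounds: "\<forall>a\<in>Y. \<forall>b\<in>Y. G a b = lower_entropy_flux \<phi> F a b \<and> G a b = upper_entropy_flux \<phi> F a b"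
  show "\<forall>um\<in>Y. \<forall>u0\<in>Y. \<forall>up\<in>Y. \<phi> u0 u0 up - \<phi> u0 um u0 = G u0 up - G um u0"
  proof (intro ballI)
    fix um u0 up assume "um \<in> Y" "u0 \<in> Y" "up \<in> Y"
    with bounds have "G um u0 = lower_entropy_flux \<phi> F um u0" "G u0 up = upper_entropy_flux \<phi> F u0 up"
      by blast+
    then show "\<phi> u0 u0 up - \<phi> u0 um u0 = G u0 up - G um u0"
      by (simp add: lower_entropy_flux_def upper_entropy_flux_def)
  qed
qed

lemma exists_cell_entropy_ineq_iff:
  fixes \<phi> :: "'a \<Rightarrow> 'a \<Rightarrow> 'a \<Rightarrow> real"
  shows "(\<exists>G. (\<forall>u\<in>Y. G u u = F u) \<and>
      (\<forall>um\<in>Y. \<forall>u0\<in>Y. \<forall>up\<in>Y. \<phi> u0 u0 up - \<phi> u0 um u0 \<ge> G u0 up - G um u0))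
    \<longleftrightarrow> (\<forall>a\<in>Y. \<forall>b\<in>Y. lower_entropy_flux \<phi> F a b \<le> upper_entropy_flux \<phi> F a b)"
proof
  assume "\<exists>G. (\<forall>u\<in>Y. G u u = F u) \<and>
      (\<forall>um\<in>Y. \<forall>u0\<in>Y. \<forall>up\<in>Y. \<phi> u0 u0 up - \<phi> u0 um u0 \<ge> G u0 up - G um u0)"
  then obtain G where consistent: "\<forall>u\<in>Y. G u u = F u"
    and cell: "\<forall>um\<in>Y. \<forall>u0\<in>Y. \<forall>up\<in>Y. \<phi> u0 u0 up - \<phi> u0 um u0 \<ge> G u0 up - G um u0"
    by blast
  from cell have "\<forall>a\<in>Y. \<forall>b\<in>Y. lower_entropy_flux \<phi> F a b \<le> G a b \<and> G a b \<le> upper_entropy_flux \<phi> F a b"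
    unfolding cell_entropy_ineq_iff_between_bounds[of Y G F, OF consistent] .
  then show "\<forall>a\<in>Y. \<forall>b\<in>Y. lower_entropy_flux \<phi> F a b \<le> upper_entropy_flux \<phi> F a b"
    by (meson order_trans)
next
  assume "\<forall>a\<in>Y. \<forall>b\<in>Y. lower_entropy_flux \<phi> F a b \<le> upper_entropy_flux \<phi> F a b"
  then have "\<forall>um\<in>Y. \<forall>u0\<in>Y. \<forall>up\<in>Y.
      \<phi> u0 u0 up - \<phi> u0 um u0 \<ge> lower_entropy_flux \<phi> F u0 up - lower_entropy_flux \<phi> F um u0"
    using cell_entropy_ineq_iff_between_bounds[of Y "lower_entropy_flux \<phi> F" F \<phi>] by simp
  then show "\<exists>G. (\<forall>u\<in>Y. G u u = F u) \<and>
      (\<forall>um\<in>Y. \<forall>u0\<in>Y. \<forall>up\<in>Y. \<phi> u0 u0 up - \<phi> u0 um u0 \<ge> G u0 up - G um u0)"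
    by (intro exI[of _ "lower_entropy_flux \<phi> F"]) simp
qed

lemma exists_cell_entropy_eq_iff:
  fixes \<phi> :: "'a \<Rightarrow> 'a \<Rightarrow> 'a \<Rightarrow> real"
  shows "(\<exists>G. (\<forall>u\<in>Y. G u u = F u) \<and>
      (\<forall>um\<in>Y. \<forall>u0\<in>Y. \<forall>up\<in>Y. \<phi> u0 u0 up - \<phi> u0 um u0 = G u0 up - G um u0))
    \<longleftrightarrow> (\<forall>a\<in>Y. \<forall>b\<in>Y. lower_entropy_flux \<phi> F a b = upper_entropy_flux \<phi> F a b)"
proof
  assume "\<exists>G. (\<forall>u\<in>Y. G u u = F u) \<and>
      (\<forall>um\<in>Y. \<forall>u0\<in>Y. \<forall>up\<in>Y. \<phi> u0 u0 up - \<phi> u0 um u0 = G u0 up - G um u0)"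
  then obtain G where consistent: "\<forall>u\<in>Y. G u u = F u"
    and cell: "\<forall>um\<in>Y. \<forall>u0\<in>Y. \<forall>up\<in>Y. \<phi> u0 u0 up - \<phi> u0 um u0 = G u0 up - G um u0"
    by blast
  from cell have "\<forall>a\<in>Y. \<forall>b\<in>Y. G a b = lower_entropy_flux \<phi> F a b \<and> G a b = upper_entropy_flux \<phi> F a b"
    unfolding cell_entropy_eq_iff_at_bounds[of Y G F, OF consistent] .
  then show "\<forall>a\<in>Y. \<forall>b\<in>Y. lower_entropy_flux \<phi> F a b = upper_entropy_flux \<phi> F a b"
    by metis
next
  assume "\<forall>a\<in>Y. \<forall>b\<in>Y. lower_entropy_flux \<phi> F a b = upper_entropy_flux \<phi> F a b"
  then have "\<forall>um\<in>Y. \<forall>u0\<in>Y. \<forall>up\<in>Y.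
      \<phi> u0 u0 up - \<phi> u0 um u0 = lower_entropy_flux \<phi> F u0 up - lower_entropy_flux \<phi> F um u0"
    using cell_entropy_eq_iff_at_bounds[of Y "lower_entropy_flux \<phi> F" F \<phi>] by simp
  then show "\<exists>G. (\<forall>u\<in>Y. G u u = F u) \<and>
      (\<forall>um\<in>Y. \<forall>u0\<in>Y. \<forall>up\<in>Y. \<phi> u0 u0 up - \<phi> u0 um u0 = G u0 up - G um u0)"
    by (intro exI[of _ "lower_entropy_flux \<phi> F"]) simp
qed

lemma cell_entropy_eq_imp_mean_of_bounds:
  fixes \<phi> :: "'a \<Rightarrow> 'a \<Rightarrow> 'a \<Rightarrow> real"
  shows "\<forall>G. (\<forall>u\<in>Y. G u u = F u) \<and>
      (\<forall>um\<in>Y. \<forall>u0\<in>Y. \<forall>up\<in>Y. \<phi> u0 u0 up - \<phi> u0 um u0 = G u0 up - G um u0)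
    \<longrightarrow> (\<forall>a\<in>Y. \<forall>b\<in>Y. G a b = (lower_entropy_flux \<phi> F a b + upper_entropy_flux \<phi> F a b) / 2)"
proof (intro allI impI ballI, elim conjE)
  fix G a b
  assume "\<forall>u\<in>Y. G u u = F u"
    and "\<forall>um\<in>Y. \<forall>u0\<in>Y. \<forall>up\<in>Y. \<phi> u0 u0 up - \<phi> u0 um u0 = G u0 up - G um u0"
    and "a \<in> Y" "b \<in> Y"
  then have "G a b = lower_entropy_flux \<phi> F a b" "G a b = upper_entropy_flux \<phi> F a b"
    using cell_entropy_eq_iff_at_bounds[of Y G F \<phi>] by blast+
  then show "G a b = (lower_entropy_flux \<phi> F a b + upper_entropy_flux \<phi> F a b) / 2"
    by simp
qed

theorem mainTheorem5:
  fixes Y :: "(real^'n) set"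
    and \<omega> f :: "real^'n \<Rightarrow> real^'n"
    and F :: "real^'n \<Rightarrow> real"
    and H :: "real^'n \<Rightarrow> real^'m^'n"
    and g :: "real^'n \<Rightarrow> real^'m"
    and gnum :: "real^'n \<Rightarrow> real^'n \<Rightarrow> real^'m"
    and fnum :: "real^'n \<Rightarrow> real^'n \<Rightarrow> real^'n"
  assumes "open Y"
    and "\<And>u. u \<in> Y \<Longrightarrow> fnum u u = f u"
    and "\<And>u. u \<in> Y \<Longrightarrow> gnum u u = g u"
  shows
   "((\<exists>Fnum :: real^'n \<Rightarrow> real^'n \<Rightarrow> real.
        (\<forall>u\<in>Y. Fnum u u = F u) \<and>
        (\<forall>um\<in>Y. \<forall>u0\<in>Y. \<forall>up\<in>Y.
           \<omega> u0 \<bullet> (fnum u0 up - fnum um u0 + H u0 *v gnum u0 up - H u0 *v gnum um u0)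
             \<ge> Fnum u0 up - Fnum um u0))
     \<longleftrightarrow>
     (\<forall>um\<in>Y. \<forall>up\<in>Y.
        jump \<omega> um up \<bullet> fnum um up
        + jump (\<lambda>u. \<omega> u v* H u) um up \<bullet> gnum um up
        - jump (\<lambda>u. \<omega> u \<bullet> (H u *v g u)) um up
        \<le> jump (\<lambda>u. \<omega> u \<bullet> f u - F u) um up))
  \<and>
   ((\<exists>Fnum :: real^'n \<Rightarrow> real^'n \<Rightarrow> real.
        (\<forall>u\<in>Y. Fnum u u = F u) \<and>
        (\<forall>um\<in>Y. \<forall>u0\<in>Y. \<forall>up\<in>Y.
           \<omega> u0 \<bullet> (fnum u0 up - fnum um u0 + H u0 *v gnum u0 up - H u0 *v gnum um u0)
             = Fnum u0 up - Fnum um u0))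
     \<longleftrightarrow>
     (\<forall>um\<in>Y. \<forall>up\<in>Y.
        jump \<omega> um up \<bullet> fnum um up
        + jump (\<lambda>u. \<omega> u v* H u) um up \<bullet> gnum um up
        - jump (\<lambda>u. \<omega> u \<bullet> (H u *v g u)) um up
        = jump (\<lambda>u. \<omega> u \<bullet> f u - F u) um up))
  \<and>
   (\<forall>Fnum :: real^'n \<Rightarrow> real^'n \<Rightarrow> real.
        ((\<forall>u\<in>Y. Fnum u u = F u) \<and>
         (\<forall>um\<in>Y. \<forall>u0\<in>Y. \<forall>up\<in>Y.
           \<omega> u0 \<bullet> (fnum u0 up - fnum um u0 + H u0 *v gnum u0 up - H u0 *v gnum um u0)
             = Fnum u0 up - Fnum um u0))
      \<longrightarrow>
        (\<forall>um\<in>Y. \<forall>up\<in>Y.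
           Fnum um up = avg F um up + avg \<omega> um up \<bullet> fnum um up
             - avg (\<lambda>u. \<omega> u \<bullet> f u) um up
             - avg (\<lambda>u. \<omega> u \<bullet> (H u *v g u)) um up
             + avg (\<lambda>u. \<omega> u v* H u) um up \<bullet> gnum um up))"
proof -
  define \<phi> where "\<phi> w a b = \<omega> w \<bullet> (fnum a b + H w *v gnum a b)" for w a b
  let ?lo = "lower_entropy_flux \<phi> F" and ?hi = "upper_entropy_flux \<phi> F"
  have cell: "\<omega> u0 \<bullet> (fnum u0 up - fnum um u0 + H u0 *v gnum u0 up - H u0 *v gnum um u0)
      = \<phi> u0 u0 up - \<phi> u0 um u0" for um u0 up
    by (simp add: \<phi>_def inner_diff_right inner_add_right)
  have interface: "jump \<omega> a b \<bullet> fnum a b + jump (\<lambda>u. \<omega> u v* H u) a b \<bullet> gnum a b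
      - jump (\<lambda>u. \<omega> u \<bullet> (H u *v g u)) a b - jump (\<lambda>u. \<omega> u \<bullet> f u - F u) a b = ?lo a b - ?hi a b"
    if "a \<in> Y" "b \<in> Y" for a b
    using that assms(2,3)
    by (simp add: jump_def \<phi>_def lower_entropy_flux_def upper_entropy_flux_def
        inner_diff_left inner_add_right dot_lmul_matrix algebra_simps)
  have mean: "avg F a b + avg \<omega> a b \<bullet> fnum a b - avg (\<lambda>u. \<omega> u \<bullet> f u) a b
      - avg (\<lambda>u. \<omega> u \<bullet> (H u *v g u)) a b + avg (\<lambda>u. \<omega> u v* H u) a b \<bullet> gnum a b = (?lo a b + ?hi a b) / 2"
    if "a \<in> Y" "b \<in> Y" for a b
    using that assms(2,3)
    by (simp add: avg_def \<phi>_def lower_entropy_flux_def upper_entropy_flux_def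
        inner_add_left inner_add_right dot_lmul_matrix field_simps)
  have jump_ineq_iff: "jump \<omega> a b \<bullet> fnum a b + jump (\<lambda>u. \<omega> u v* H u) a b \<bullet> gnum a b
      - jump (\<lambda>u. \<omega> u \<bullet> (H u *v g u)) a b \<le> jump (\<lambda>u. \<omega> u \<bullet> f u - F u) a b \<longleftrightarrow> ?lo a b \<le> ?hi a b"
    and jump_eq_iff: "jump \<omega> a b \<bullet> fnum a b + jump (\<lambda>u. \<omega> u v* H u) a b \<bullet> gnum a b
      - jump (\<lambda>u. \<omega> u \<bullet> (H u *v g u)) a b = jump (\<lambda>u. \<omega> u \<bullet> f u - F u) a b \<longleftrightarrow> ?lo a b = ?hi a b"
    if "a \<in> Y" "b \<in> Y" for a b
    using interface[OF that] by linarith+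
  show ?thesis
    unfolding cell exists_cell_entropy_ineq_iff exists_cell_entropy_eq_iff
    using cell_entropy_eq_imp_mean_of_bounds[of Y F \<phi>]
    by (simp only: jump_ineq_iff jump_eq_iff mean cong: ball_cong)
qed

end
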